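(* In the setting described in the context, $f_{avg}(\pi^{io})\ge\mathbb{E}_{v\sim h}[f(\psi^c(v))]$.
   Context: Let $I=\{1,\dots,n\}$ be a set of items, $B$ a positive integer, $[B]=\{1,\dots,B\}$, $[0;B]=\{0,1,\dots,B\}$; for $u,w\in[0;B]^I$, $u\le w$ means coordinatewise. Let $f:[0;B]^I\to\mathbb{R}_{\ge0}$ be monotone ($u\le w\Rightarrow f(u)\le f(w)$) and lattice submodular ($f(u\vee s\mathbf{1}_i)-f(u)\ge f(w\vee s\mathbf{1}_i)-f(w)$ for all $u\le w$, $s\in[0;B]$, $i\in I$). Each item $i$ has a random state $\Phi(i)\in[B]$, independent across items, with known distribution $p_i(s)=\Pr[\Phi(i)=s]$; the state of an item is observed only after selecting it. Item $i$ in state $s$ has a nonnegative integer cost $c_i(s)$, with $c_i(s)\ge c_i(s')$ whenever $s\ge s'$. $C$ is a positive integer budget and $\mathcal{I}^{out}\subseteq 2^I$ is a downward-closed family. For $S\subseteq I$ and $\phi\in[B]^I$, $\phi_S$ equals $\phi(i)$ on $S$ and $0$ elsewhere; $\overline{f}(S)=\mathbb{E}[f(\Phi_S)]$, $F(\overline{x})=\sum_{U\subseteq I}\prod_{i\in U}\overline{x}(i)\prod_{i\notin U}(1-\overline{x}(i))\overline{f}(U)$, $P_{\mathcal{I}^{out}}=\mathrm{conv}\{\mathbf{1}_S: S\in\mathcal{I}^{out}\}$. For a policy $\pi$ (which sequentially selects items based on states observed so far), $I(\pi,\phi)$ is the set selected under realization $\phi$ and $f_{avg}(\pi)=\mathbb{E}[f(\Phi_{I(\pi,\Phi)})]$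 (expectation also over the policy's randomness). A monotone $(\beta,\gamma)$-balanced CRS for $\mathcal{I}^{out}$ is a (possibly randomized) scheme that, for any $\overline{z}\in\beta\cdot P_{\mathcal{I}^{out}}$ and the random set $R$ containing each $i$ independently with probability $\overline{z}(i)$, maps $R$ to $\chi(R)\subseteq R$ with $\chi(R)\in\mathcal{I}^{out}$, such that $\Pr[i\in\chi(R)\mid i\in R]\ge\gamma$ for all $i$, and for $i\in R\subseteq R'$, $\Pr[i\in\chi(R)]\ge\Pr[i\in\chi(R')]$. Assume such a scheme $\chi^{io}$ exists for given $\beta,\gamma\in[0,1]$. Problem P1: variables $x(i,t)\ge0$ for $i\in I$, $t\in\{1,\dots,C-c_i(B)\}$, $\overline{x}(i)=\sum_t x(i,t)$; maximize $F(\overline{x})$ subject to $\overline{x}(i)\le1$, $\overline{x}\in P_{\mathcal{I}^{out}}$, and for all $t\in\{1,\dots,C\}$: $\sum_{i\in I}\mathbb{E}[\min\{c_i(\Phi(i)),t\}]\sum_{t'=1}^{t}x(i,t')\le 2t$. Policy $\pi^{io}$: (1) compute a solution $y$ of P1 by the stochastic continuous greedy algorithm of Asadpour and Nazerzadeh (2016) with stopping time $l=\min\{\beta,1/4\}$ and step size $\delta=o(n^{-3})$; let $\overline{y}(i)=\sum_t y(i,t)$. (2) Form a random set $R^{io}$ containing each $i$ independently with probability $\overline{y}(i)$, and apply $\chi^{io}$ (with $\overline{z}=\overline{y}$) to obtain $\chi^{io}(R^{io})\in\mathcal{I}^{out}$. (3) For each $i\in\chi^{io}(R^{io})$ independently sample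 $t^{io}(i)\in\{1,\dots,C-c_i(B)\}$ with probability $y(i,t)/\overline{y}(i)$; sort $\chi^{io}(R^{io})$ in nondecreasing order of $t^{io}$ (ties broken by least index). Starting with $C'=0$, go through the items in this order: if $C'\le t^{io}(i)$, select $i$, observe $\Phi(i)$ and update $C'\leftarrow C'+c_i(\Phi(i))$; otherwise skip $i$. Distribution $h$: $v\in[0;B]^I$ has independent coordinates with $\Pr[v(i)=j]=p_i(j)\overline{y}(i)$ for $j\in[B]$ and $\Pr[v(i)=0]=1-\overline{y}(i)$; $R(v)=\{i:v(i)\ne0\}$. Mapping $\psi^a$: $\psi^a(v)(i)=v(i)$ if $i\in\chi^{io}(R(v))$, else $0$. Mapping $\psi^b$: for each $i\in R(v)$ independently sample $t(i)\in\{1,\dots,C-c_i(B)\}$ with $\Pr[t(i)=t]=y(i,t)/\overline{y}(i)$; $\psi^b(v)(i)=v(i)$ if $i\in R(v)$ and $\sum_{i'\in R(v)\setminus\{i\},\,t(i')\le t(i)}c_{i'}(v(i'))\le t(i)$, else $0$. Mapping $\psi^c$: apply $\psi^a$ and $\psi^b$ to $v$ independently and set $\psi^c(v)(i)=v(i)$ if $\psi^a(v)(i)=v(i)$ and $\psi^b(v)(i)=v(i)$, and $0$ otherwise. *)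

theory Defs
  imports "HOL-Probability.Probability"
begin

text \<open>Items are the natural numbers in I = {1..n}; a vector in [0;B]^I is a function
  nat => nat that vanishes outside I and is bounded by B on I.  State 0 means
  "not selected / absent".\<close>

definition vecs :: "nat set \<Rightarrow> nat \<Rightarrow> (nat \<Rightarrow> nat) set" where
  "vecs I B = {u. (\<forall>i\<in>I. u i \<le> B) \<and> (\<forall>i. i \<notin> I \<longrightarrow> u i = 0)}"

definition unit_vec :: "nat \<Rightarrow> nat \<Rightarrow> (nat \<Rightarrow> nat)" where
  "unit_vec s i = (\<lambda>j. if j = i then s else 0)"

definition monotone_fn :: "nat set \<Rightarrow> nat \<Rightarrow> ((nat \<Rightarrow> nat) \<Rightarrow> real) \<Rightarrow> bool" where
  "monotone_fn I B f \<longleftrightarrow> (\<forall>u\<in>vecs I B. \<forall>w\<in>vecs I B. u \<le> w \<longrightarrow> f u \<le> f w)"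

definition lattice_submodular :: "nat set \<Rightarrow> nat \<Rightarrow> ((nat \<Rightarrow> nat) \<Rightarrow> real) \<Rightarrow> bool" where
  "lattice_submodular I B f \<longleftrightarrow>
     (\<forall>u\<in>vecs I B. \<forall>w\<in>vecs I B. \<forall>s\<le>B. \<forall>i\<in>I. u \<le> w \<longrightarrow>
        f (sup u (unit_vec s i)) - f u \<ge> f (sup w (unit_vec s i)) - f w)"

definition downward_closed :: "nat set \<Rightarrow> nat set set \<Rightarrow> bool" where
  "downward_closed I F \<longleftrightarrow> F \<subseteq> Pow I \<and> (\<forall>S\<in>F. \<forall>T. T \<subseteq> S \<longrightarrow> T \<in> F)"

text \<open>z \<in> beta * P_F, with P_F = conv {1_S : S \<in> F}  (F finite, so convex hull = finite
  convex combinations).\<close>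
definition in_scaled_poly :: "real \<Rightarrow> nat set set \<Rightarrow> (nat \<Rightarrow> real) \<Rightarrow> bool" where
  "in_scaled_poly \<beta> F z \<longleftrightarrow>
     (\<exists>w. (\<forall>S\<in>F. w S \<ge> 0) \<and> sum w F = 1 \<and>
          (\<forall>i. z i = \<beta> * (\<Sum>S\<in>F. w S * indicator S i)))"

definition Rdist :: "nat set \<Rightarrow> (nat \<Rightarrow> real) \<Rightarrow> nat set pmf" where
  "Rdist I z = map_pmf (\<lambda>b. {i\<in>I. b i}) (Pi_pmf I False (\<lambda>i. bernoulli_pmf (z i)))"

text \<open>Pr[i \<in> chi(R) | i \<in> R] \<ge> gamma is written
  as Pr[i \<in> chi(R) \<and> i \<in> R] \<ge> gamma * Pr[i \<in> R] (= gamma * z i).\<close>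
definition monotone_balanced_CRS ::
  "nat set \<Rightarrow> nat set set \<Rightarrow> real \<Rightarrow> real \<Rightarrow> ((nat \<Rightarrow> real) \<Rightarrow> nat set \<Rightarrow> nat set pmf) \<Rightarrow> bool" where
  "monotone_balanced_CRS I F \<beta> \<gamma> chi \<longleftrightarrow>
     (\<forall>z. (\<forall>i. z i \<ge> 0) \<and> in_scaled_poly \<beta> F z \<longrightarrow>
        (\<forall>R. R \<subseteq> I \<longrightarrow> set_pmf (chi z R) \<subseteq> {S. S \<subseteq> R \<and> S \<in> F}) \<and>
        (\<forall>i\<in>I. measure_pmf.prob (bind_pmf (Rdist I z) (\<lambda>R. map_pmf (\<lambda>S. (R, S)) (chi z R)))
                   {(R, S). i \<in> S \<and> i \<in> R}
                 \<ge> \<gamma> * measure_pmf.prob (Rdist I z) {R. i \<in> R}) \<and>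
        (\<forall>i R R'. i \<in> R \<longrightarrow> R \<subseteq> R' \<longrightarrow> R' \<subseteq> I \<longrightarrow>
           measure_pmf.prob (chi z R) {S. i \<in> S} \<ge> measure_pmf.prob (chi z R') {S. i \<in> S}))"

definition slots :: "(nat \<Rightarrow> nat \<Rightarrow> nat) \<Rightarrow> nat \<Rightarrow> nat \<Rightarrow> nat \<Rightarrow> nat set" where
  "slots c B C i = {1..C - c i B}"

definition ybar :: "(nat \<Rightarrow> nat \<Rightarrow> real) \<Rightarrow> (nat \<Rightarrow> nat \<Rightarrow> nat) \<Rightarrow> nat \<Rightarrow> nat \<Rightarrow> nat \<Rightarrow> real" where
  "ybar y c B C i = (\<Sum>t\<in>slots c B C i. y i t)"

text \<open>Feasibility for problem P1 (the objective F is irrelevant for feasibility).\<close>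
definition P1_feasible ::
  "nat set \<Rightarrow> nat set set \<Rightarrow> (nat \<Rightarrow> nat pmf) \<Rightarrow> (nat \<Rightarrow> nat \<Rightarrow> nat) \<Rightarrow> nat \<Rightarrow> nat
    \<Rightarrow> (nat \<Rightarrow> nat \<Rightarrow> real) \<Rightarrow> bool" where
  "P1_feasible I F p c B C x \<longleftrightarrow>
     (\<forall>i t. x i t \<ge> 0) \<and>
     (\<forall>i t. (i \<notin> I \<or> t \<notin> slots c B C i) \<longrightarrow> x i t = 0) \<and>
     (\<forall>i\<in>I. ybar x c B C i \<le> 1) \<and>
     in_scaled_poly 1 F (ybar x c B C) \<and>
     (\<forall>t\<in>{1..C}. (\<Sum>i\<in>I. measure_pmf.expectation (p i) (\<lambda>s. real (min (c i s) t)) *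
                            (\<Sum>t'=1..t. x i t')) \<le> 2 * real t)"

definition tdist :: "(nat \<Rightarrow> nat \<Rightarrow> real) \<Rightarrow> (nat \<Rightarrow> nat \<Rightarrow> nat) \<Rightarrow> nat \<Rightarrow> nat \<Rightarrow> nat \<Rightarrow> nat pmf" where
  "tdist y c B C i = embed_pmf (\<lambda>t. if t \<in> slots c B C i then y i t / ybar y c B C i else 0)"

fun run_sel :: "(nat \<Rightarrow> nat \<Rightarrow> nat) \<Rightarrow> (nat \<Rightarrow> nat) \<Rightarrow> (nat \<Rightarrow> nat) \<Rightarrow> nat \<Rightarrow> nat list \<Rightarrow> nat set" where
  "run_sel c t \<phi> C' [] = {}"
| "run_sel c t \<phi> C' (i # is) =
     (if C' \<le> t i then insert i (run_sel c t \<phi> (C' + c i (\<phi> i)) is)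
      else run_sel c t \<phi> C' is)"

text \<open>The states of all items are drawn independently up front; the policy only uses
  Phi(i) after selecting i, so this gives the same distribution.
  The order: sort_key is a stable sort, applied to the list of S in increasing index
  order, so items are sorted by t with ties broken by least index.\<close>
definition policy_io ::
  "nat set \<Rightarrow> (nat \<Rightarrow> nat pmf) \<Rightarrow> (nat \<Rightarrow> nat \<Rightarrow> nat) \<Rightarrow> nat \<Rightarrow> nat
    \<Rightarrow> ((nat \<Rightarrow> real) \<Rightarrow> nat set \<Rightarrow> nat set pmf) \<Rightarrow> (nat \<Rightarrow> nat \<Rightarrow> real) \<Rightarrow> (nat \<Rightarrow> nat) pmf" where
  "policy_io I p c B C chi y =
     bind_pmf (Rdist I (ybar y c B C)) (\<lambda>R.
     bind_pmf (chi (ybar y c B C) R) (\<lambda>S.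
     bind_pmf (Pi_pmf S 0 (tdist y c B C)) (\<lambda>t.
     bind_pmf (Pi_pmf I 0 p) (\<lambda>\<phi>.
       let ord = sort_key t (sorted_list_of_set S);
           sel = run_sel c t \<phi> 0 ord
       in return_pmf (\<lambda>i. if i \<in> sel then \<phi> i else 0)))))"

definition f_avg_io ::
  "((nat \<Rightarrow> nat) \<Rightarrow> real) \<Rightarrow> nat set \<Rightarrow> (nat \<Rightarrow> nat pmf) \<Rightarrow> (nat \<Rightarrow> nat \<Rightarrow> nat) \<Rightarrow> nat \<Rightarrow> nat
    \<Rightarrow> ((nat \<Rightarrow> real) \<Rightarrow> nat set \<Rightarrow> nat set pmf) \<Rightarrow> (nat \<Rightarrow> nat \<Rightarrow> real) \<Rightarrow> real" where
  "f_avg_io f I p c B C chi y = measure_pmf.expectation (policy_io I p c B C chi y) f"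

definition h_dist :: "nat set \<Rightarrow> (nat \<Rightarrow> nat pmf) \<Rightarrow> (nat \<Rightarrow> real) \<Rightarrow> (nat \<Rightarrow> nat) pmf" where
  "h_dist I p z = Pi_pmf I 0 (\<lambda>i. bind_pmf (bernoulli_pmf (z i))
                                   (\<lambda>b. if b then p i else return_pmf 0))"

definition Rv :: "(nat \<Rightarrow> nat) \<Rightarrow> nat set" where
  "Rv v = {i. v i \<noteq> 0}"

definition psi_a :: "((nat \<Rightarrow> real) \<Rightarrow> nat set \<Rightarrow> nat set pmf) \<Rightarrow> (nat \<Rightarrow> real) \<Rightarrow> (nat \<Rightarrow> nat)
    \<Rightarrow> (nat \<Rightarrow> nat) pmf" where
  "psi_a chi z v = map_pmf (\<lambda>S i. if i \<in> S then v i else 0) (chi z (Rv v))"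

definition psi_b :: "(nat \<Rightarrow> nat \<Rightarrow> real) \<Rightarrow> (nat \<Rightarrow> nat \<Rightarrow> nat) \<Rightarrow> nat \<Rightarrow> nat \<Rightarrow> (nat \<Rightarrow> nat)
    \<Rightarrow> (nat \<Rightarrow> nat) pmf" where
  "psi_b y c B C v = map_pmf
     (\<lambda>t i. if i \<in> Rv v \<and> (\<Sum>i'\<in>{i' \<in> Rv v - {i}. t i' \<le> t i}. c i' (v i')) \<le> t i
            then v i else 0)
     (Pi_pmf (Rv v) 0 (tdist y c B C))"

definition psi_c :: "((nat \<Rightarrow> real) \<Rightarrow> nat set \<Rightarrow> nat set pmf) \<Rightarrow> (nat \<Rightarrow> nat \<Rightarrow> real)
    \<Rightarrow> (nat \<Rightarrow> nat \<Rightarrow> nat) \<Rightarrow> nat \<Rightarrow> nat \<Rightarrow> (nat \<Rightarrow> nat) \<Rightarrow> (nat \<Rightarrow> nat) pmf" where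
  "psi_c chi y c B C v =
     bind_pmf (psi_a chi (ybar y c B C) v) (\<lambda>a.
     bind_pmf (psi_b y c B C v) (\<lambda>b.
       return_pmf (\<lambda>i. if a i = v i \<and> b i = v i then v i else 0)))"

end

theory Submission
  imports Defs
begin

text \<open>Couple the policy with \<open>\<psi>\<^sup>c\<close>: draw \<open>v \<sim> h\<close> (a random set \<open>R\<close> together with
  the states of its items), the CRS output \<open>S \<subseteq> R\<close>, and slot times \<open>t\<close> for the items
  of \<open>R\<close>; both the policy and \<open>\<psi>\<^sup>c\<close> can be run on this sample.  If \<open>\<psi>\<^sup>c\<close> keeps an
  item \<open>i\<close>, then the items of \<open>S\<close> scheduled no later than \<open>i\<close> have total cost at most
  \<open>t(i)\<close>; the policy's counter, which only adds costs of such items, is therefore at most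
  \<open>t(i)\<close> when it reaches \<open>i\<close>, so the policy selects \<open>i\<close> as well.  Thus \<open>\<psi>\<^sup>c(v)\<close> is
  coordinatewise below the policy's outcome, and monotonicity of \<open>f\<close> yields the
  inequality of expectations.\<close>

lemma vecs_downward_closed: "u \<le> w \<Longrightarrow> w \<in> vecs I B \<Longrightarrow> u \<in> vecs I B"
  unfolding vecs_def le_fun_def using le_trans by fastforce

lemma finite_vecs:
  assumes "finite I"
  shows "finite (vecs I B)"
proof -
  have "vecs I B = PiE_dflt I 0 (\<lambda>_. {..B})"
    by (auto simp: vecs_def PiE_dflt_def)
  then show ?thesis
    using assms by auto
qed

lemma Rv_subset_if_in_vecs: "v \<in> vecs I B \<Longrightarrow> Rv v \<subseteq> I"
  by (auto simp: vecs_def Rv_def)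

lemma expectation_map_pmf_mono:
  assumes "monotone_fn I B f" "finite I"
    and "\<And>\<omega>. \<omega> \<in> set_pmf \<Omega> \<Longrightarrow> g \<omega> \<le> h \<omega>"
    and "\<And>\<omega>. \<omega> \<in> set_pmf \<Omega> \<Longrightarrow> h \<omega> \<in> vecs I B"
  shows "measure_pmf.expectation (map_pmf g \<Omega>) f \<le> measure_pmf.expectation (map_pmf h \<Omega>) f"
proof -
  have g_vecs: "\<And>\<omega>. \<omega> \<in> set_pmf \<Omega> \<Longrightarrow> g \<omega> \<in> vecs I B"
    using assms(3,4) vecs_downward_closed by blast
  have "finite (set_pmf (map_pmf g \<Omega>))" "finite (set_pmf (map_pmf h \<Omega>))"
    using g_vecs assms(4) finite_vecs[OF assms(2)] by (auto intro: finite_subset)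
  then have "integrable \<Omega> (\<lambda>\<omega>. f (g \<omega>))" "integrable \<Omega> (\<lambda>\<omega>. f (h \<omega>))"
    using integrable_measure_pmf_finite integrable_map_pmf_eq by blast+
  moreover have "AE \<omega> in \<Omega>. f (g \<omega>) \<le> f (h \<omega>)"
    using assms(1,3,4) g_vecs by (intro AE_pmfI) (simp add: monotone_fn_def)
  ultimately show ?thesis by (simp add: integral_mono_AE)
qed

lemma subset_if_in_set_Rdist: "R \<in> set_pmf (Rdist I z) \<Longrightarrow> R \<subseteq> I"
  unfolding Rdist_def set_map_pmf by blast

lemma h_dist_eq_bind_Rdist:
  assumes "finite I"
  shows "h_dist I p z = Rdist I z \<bind> (\<lambda>R. Pi_pmf R 0 p)"
proof -
  have "h_dist I p z = Pi_pmf I False (\<lambda>i. bernoulli_pmf (z i)) \<bind>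
      (\<lambda>b. Pi_pmf I 0 (\<lambda>i. if b i then p i else return_pmf 0))"
    unfolding h_dist_def by (rule Pi_pmf_bind[OF assms])
  also have "\<dots> = Pi_pmf I False (\<lambda>i. bernoulli_pmf (z i)) \<bind> (\<lambda>b. Pi_pmf {i \<in> I. b i} 0 p)"
    by (simp only: Pi_pmf_if_set[OF assms])
  finally show ?thesis
    unfolding Rdist_def bind_map_pmf .
qed

lemma Rv_eq_if_in_set_Pi_pmf:
  assumes "finite R" "\<forall>i\<in>R. 0 \<notin> set_pmf (p i)" "v \<in> set_pmf (Pi_pmf R 0 p)"
  shows "Rv v = R"
proof -
  have "\<forall>i. (i \<in> R \<longrightarrow> v i \<in> set_pmf (p i)) \<and> (i \<notin> R \<longrightarrow> v i = 0)"
    using assms(1,3) by (simp add: set_Pi_pmf PiE_dflt_def)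
  then show ?thesis
    using assms(2) unfolding Rv_def by force
qed

lemma set_h_dist_subset_vecs:
  assumes "finite I" "\<forall>i\<in>I. set_pmf (p i) \<subseteq> {1..B}"
  shows "set_pmf (h_dist I p z) \<subseteq> vecs I B"
proof
  fix v assume "v \<in> set_pmf (h_dist I p z)"
  then obtain R where "R \<subseteq> I" "v \<in> set_pmf (Pi_pmf R 0 p)"
    using assms(1) by (auto simp: h_dist_eq_bind_Rdist dest: subset_if_in_set_Rdist)
  moreover from this have "finite R"
    using assms(1) finite_subset by blast
  ultimately have "\<forall>i. (i \<in> R \<longrightarrow> v i \<in> set_pmf (p i)) \<and> (i \<notin> R \<longrightarrow> v i = 0)"
    by (simp add: set_Pi_pmf PiE_dflt_def)
  with \<open>R \<subseteq> I\<close> show "v \<in> vecs I B"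
    using assms(2) unfolding vecs_def by force
qed

lemma run_sel_subset: "run_sel c t \<phi> C0 xs \<subseteq> set xs"
  by (induction xs arbitrary: C0) auto

lemma run_sel_cong:
  "(\<And>i. i \<in> set xs \<Longrightarrow> \<phi> i = \<phi>' i) \<Longrightarrow> run_sel c t \<phi> C0 xs = run_sel c t \<phi>' C0 xs"
  by (induction xs arbitrary: C0) auto

lemma mem_run_sel_if_earlier_costs_le:
  assumes "distinct xs" "sorted (map t xs)" "i \<in> set xs"
    and "C0 + (\<Sum>j\<in>{j\<in>set xs. j \<noteq> i \<and> t j \<le> t i}. c j (\<phi> j)) \<le> t i"
  shows "i \<in> run_sel c t \<phi> C0 xs"
  using assms
proof (induction xs arbitrary: C0)
  case Nil
  then show ?case by simp
next
  case (Cons a xs)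
  show ?case
  proof (cases "a = i")
    case True
    then show ?thesis using Cons.prems by auto
  next
    case False
    let ?earlier = "{j\<in>set xs. j \<noteq> i \<and> t j \<le> t i}"
    have i_in_xs: "i \<in> set xs" using Cons.prems False by auto
    then have "t a \<le> t i" using Cons.prems(2) by auto
    then have "{j\<in>set (a # xs). j \<noteq> i \<and> t j \<le> t i} = insert a ?earlier"
      using False by auto
    moreover have "a \<notin> ?earlier" using Cons.prems(1) by auto
    ultimately have costs: "(\<Sum>j\<in>{j\<in>set (a # xs). j \<noteq> i \<and> t j \<le> t i}. c j (\<phi> j)) =
        c a (\<phi> a) + (\<Sum>j\<in>?earlier. c j (\<phi> j))"
      by simp
    show ?thesis
      using Cons.IH[of "C0 + c a (\<phi> a)"] Cons.IH[of C0] Cons.prems costs i_in_xs by auto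
  qed
qed

definition policy_outcome ::
  "(nat \<Rightarrow> nat \<Rightarrow> nat) \<Rightarrow> (nat \<Rightarrow> nat) \<Rightarrow> nat set \<Rightarrow> (nat \<Rightarrow> nat) \<Rightarrow> nat \<Rightarrow> nat" where
  "policy_outcome c \<phi> S t =
     (\<lambda>i. if i \<in> run_sel c t \<phi> 0 (sort_key t (sorted_list_of_set S)) then \<phi> i else 0)"

lemma policy_outcome_cong:
  assumes "finite S" "\<And>i. i \<in> S \<Longrightarrow> \<phi> i = \<phi>' i"
  shows "policy_outcome c \<phi> S t = policy_outcome c \<phi>' S t"
proof -
  let ?xs = "sort_key t (sorted_list_of_set S)"
  have "set ?xs = S" using assms(1) by simp
  then have "run_sel c t \<phi> 0 ?xs = run_sel c t \<phi>' 0 ?xs"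
    using assms(2) by (intro run_sel_cong) auto
  then show ?thesis
    using run_sel_subset[of c t \<phi> 0 ?xs] \<open>set ?xs = S\<close> assms(2)
    by (auto simp: policy_outcome_def fun_eq_iff)
qed

lemma policy_outcome_le: "policy_outcome c \<phi> S t \<le> \<phi>"
  by (simp add: policy_outcome_def le_fun_def)

text \<open>The policy reads states and slot times only of the items in \<open>S\<close>, so for
  \<open>S \<subseteq> R \<subseteq> I\<close> both may as well be drawn for all items of \<open>R\<close>.\<close>

lemma policy_outcome_draw_on_superset:
  assumes "finite I" "R \<subseteq> I" "S \<subseteq> R"
  shows "Pi_pmf S 0 T \<bind> (\<lambda>t. map_pmf (\<lambda>\<phi>. policy_outcome c \<phi> S t) (Pi_pmf I 0 p)) =
    Pi_pmf R 0 p \<bind> (\<lambda>v. map_pmf (\<lambda>t. policy_outcome c v S (\<lambda>i. if i \<in> S then t i else 0))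
      (Pi_pmf R 0 T))"
proof -
  have "finite R"
    using finite_subset[OF assms(2,1)] .
  then have "finite S"
    using finite_subset[OF assms(3)] by blast
  have states_on_R: "map_pmf (\<lambda>\<phi>. policy_outcome c \<phi> S t) (Pi_pmf I 0 p) =
      map_pmf (\<lambda>\<phi>. policy_outcome c \<phi> S t) (Pi_pmf R 0 p)" for t
  proof -
    have "map_pmf (\<lambda>\<phi>. policy_outcome c \<phi> S t) (Pi_pmf I 0 p) =
        map_pmf (\<lambda>\<phi>. policy_outcome c (\<lambda>i. if i \<in> R then \<phi> i else 0) S t) (Pi_pmf I 0 p)"
      using assms(3) by (intro map_pmf_cong refl policy_outcome_cong[OF \<open>finite S\<close>]) auto
    then show ?thesis
      by (simp add: Pi_pmf_subset[OF assms(1,2)] pmf.map_comp o_def)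
  qed
  have "Pi_pmf S 0 T \<bind> (\<lambda>t. map_pmf (\<lambda>\<phi>. policy_outcome c \<phi> S t) (Pi_pmf I 0 p)) =
      Pi_pmf R 0 T \<bind> (\<lambda>t. map_pmf (\<lambda>v. policy_outcome c v S (\<lambda>i. if i \<in> S then t i else 0))
        (Pi_pmf R 0 p))"
    by (simp add: Pi_pmf_subset[OF \<open>finite R\<close> assms(3)] bind_map_pmf states_on_R)
  also have "\<dots> = Pi_pmf R 0 p \<bind> (\<lambda>v. map_pmf (\<lambda>t. policy_outcome c v S
      (\<lambda>i. if i \<in> S then t i else 0)) (Pi_pmf R 0 T))"
    unfolding map_pmf_def by (rule bind_commute_pmf)
  finally show ?thesis .
qed

lemma policy_io_eq_bind_h_dist:
  assumes "finite I" "\<forall>i\<in>I. 0 \<notin> set_pmf (p i)"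
    and chi_subset: "\<forall>R\<subseteq>I. \<forall>S\<in>set_pmf (chi (ybar y c B C) R). S \<subseteq> R"
  shows "policy_io I p c B C chi y =
    h_dist I p (ybar y c B C) \<bind> (\<lambda>v. chi (ybar y c B C) (Rv v) \<bind> (\<lambda>S.
      map_pmf (\<lambda>t. policy_outcome c v S (\<lambda>i. if i \<in> S then t i else 0))
        (Pi_pmf (Rv v) 0 (tdist y c B C))))"
proof -
  define z where "z = ybar y c B C"
  define T where "T = tdist y c B C"
  have Rv_eq: "Rv v = R" if "R \<in> set_pmf (Rdist I z)" "v \<in> set_pmf (Pi_pmf R 0 p)" for R v
  proof -
    have "R \<subseteq> I"
      using subset_if_in_set_Rdist[OF that(1)] .
    then show ?thesis
      using assms(2) finite_subset[OF _ assms(1)] that(2) by (intro Rv_eq_if_in_set_Pi_pmf) auto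
  qed
  have "policy_io I p c B C chi y = Rdist I z \<bind> (\<lambda>R. chi z R \<bind> (\<lambda>S.
      Pi_pmf S 0 T \<bind> (\<lambda>t. map_pmf (\<lambda>\<phi>. policy_outcome c \<phi> S t) (Pi_pmf I 0 p))))"
    unfolding policy_io_def policy_outcome_def map_pmf_def z_def T_def Let_def ..
  also have "\<dots> = Rdist I z \<bind> (\<lambda>R. chi z R \<bind> (\<lambda>S. Pi_pmf R 0 p \<bind> (\<lambda>v.
      map_pmf (\<lambda>t. policy_outcome c v S (\<lambda>i. if i \<in> S then t i else 0)) (Pi_pmf R 0 T))))"
    using chi_subset unfolding z_def
    by (intro bind_pmf_cong[OF refl] policy_outcome_draw_on_superset[OF assms(1)])
      (auto dest: subset_if_in_set_Rdist)
  also have "\<dots> = Rdist I z \<bind> (\<lambda>R. Pi_pmf R 0 p \<bind> (\<lambda>v. chi z R \<bind> (\<lambda>S.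
      map_pmf (\<lambda>t. policy_outcome c v S (\<lambda>i. if i \<in> S then t i else 0)) (Pi_pmf R 0 T))))"
    by (intro bind_pmf_cong[OF refl] bind_commute_pmf)
  also have "\<dots> = Rdist I z \<bind> (\<lambda>R. Pi_pmf R 0 p \<bind> (\<lambda>v. chi z (Rv v) \<bind> (\<lambda>S.
      map_pmf (\<lambda>t. policy_outcome c v S (\<lambda>i. if i \<in> S then t i else 0)) (Pi_pmf (Rv v) 0 T))))"
    by (intro bind_pmf_cong[OF refl]) (simp add: Rv_eq)
  finally show ?thesis
    by (simp add: h_dist_eq_bind_Rdist[OF assms(1)] bind_assoc_pmf z_def T_def)
qed

text \<open>Unlike \<open>\<psi>\<^sup>b\<close>, this does not test \<open>i \<in> Rv v\<close>: for \<open>i \<notin> Rv v\<close> both readings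
  give \<open>v i = 0\<close>.\<close>

definition psi_c_outcome ::
  "(nat \<Rightarrow> nat \<Rightarrow> nat) \<Rightarrow> (nat \<Rightarrow> nat) \<Rightarrow> nat set \<Rightarrow> (nat \<Rightarrow> nat) \<Rightarrow> nat \<Rightarrow> nat" where
  "psi_c_outcome c v S t =
     (\<lambda>i. if i \<in> S \<and> (\<Sum>j\<in>{j \<in> Rv v - {i}. t j \<le> t i}. c j (v j)) \<le> t i then v i else 0)"

lemma psi_c_eq_bind:
  "psi_c chi y c B C v =
     chi (ybar y c B C) (Rv v) \<bind> (\<lambda>S. map_pmf (psi_c_outcome c v S) (Pi_pmf (Rv v) 0 (tdist y c B C)))"
proof -
  have "(\<lambda>i. if (if i \<in> S then v i else 0) = v i \<and>
          (if i \<in> Rv v \<and> (\<Sum>j\<in>{j \<in> Rv v - {i}. t j \<le> t i}. c j (v j)) \<le> t i then v i else 0) = v i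
        then v i else 0) = psi_c_outcome c v S t" for S t
    by (auto simp: psi_c_outcome_def Rv_def fun_eq_iff)
  then show ?thesis
    unfolding psi_c_def psi_a_def psi_b_def map_pmf_def bind_assoc_pmf bind_return_pmf
    by simp
qed

lemma psi_c_outcome_le_policy_outcome:
  assumes "finite (Rv v)" "S \<subseteq> Rv v"
  shows "psi_c_outcome c v S t \<le> policy_outcome c v S (\<lambda>i. if i \<in> S then t i else 0)"
proof (rule le_funI)
  fix i
  let ?t = "\<lambda>i. if i \<in> S then t i else 0"
  let ?xs = "sort_key ?t (sorted_list_of_set S)"
  show "psi_c_outcome c v S t i \<le> policy_outcome c v S ?t i"
  proof (cases "i \<in> S \<and> (\<Sum>j\<in>{j \<in> Rv v - {i}. t j \<le> t i}. c j (v j)) \<le> t i")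
    case True
    have "finite S" using assms finite_subset by blast
    then have xs: "set ?xs = S" "distinct ?xs" "sorted (map ?t ?xs)" by simp_all
    have "(\<Sum>j\<in>{j\<in>set ?xs. j \<noteq> i \<and> ?t j \<le> ?t i}. c j (v j))
        \<le> (\<Sum>j\<in>{j \<in> Rv v - {i}. t j \<le> t i}. c j (v j))"
      using assms True xs(1) by (intro sum_mono2) auto
    then have "i \<in> run_sel c ?t v 0 ?xs"
      using True xs by (intro mem_run_sel_if_earlier_costs_le) auto
    then show ?thesis by (simp add: policy_outcome_def psi_c_outcome_def)
  qed (auto simp: psi_c_outcome_def)
qed

definition io_coupling ::
  "nat set \<Rightarrow> (nat \<Rightarrow> nat pmf) \<Rightarrow> (nat \<Rightarrow> nat \<Rightarrow> nat) \<Rightarrow> nat \<Rightarrow> nat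
    \<Rightarrow> ((nat \<Rightarrow> real) \<Rightarrow> nat set \<Rightarrow> nat set pmf) \<Rightarrow> (nat \<Rightarrow> nat \<Rightarrow> real)
    \<Rightarrow> ((nat \<Rightarrow> nat) \<times> nat set \<times> (nat \<Rightarrow> nat)) pmf" where
  "io_coupling I p c B C chi y =
     h_dist I p (ybar y c B C) \<bind> (\<lambda>v. chi (ybar y c B C) (Rv v) \<bind> (\<lambda>S.
       map_pmf (\<lambda>t. (v, S, t)) (Pi_pmf (Rv v) 0 (tdist y c B C))))"

lemma policy_io_eq_map_io_coupling:
  assumes "finite I" "\<forall>i\<in>I. 0 \<notin> set_pmf (p i)"
    and "\<forall>R\<subseteq>I. \<forall>S\<in>set_pmf (chi (ybar y c B C) R). S \<subseteq> R"
  shows "policy_io I p c B C chi y =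
    map_pmf (\<lambda>(v, S, t). policy_outcome c v S (\<lambda>i. if i \<in> S then t i else 0))
      (io_coupling I p c B C chi y)"
  using policy_io_eq_bind_h_dist[where chi = chi, OF assms]
  by (simp add: io_coupling_def map_bind_pmf pmf.map_comp o_def)

lemma bind_h_dist_psi_c_eq_map_io_coupling:
  "h_dist I p (ybar y c B C) \<bind> psi_c chi y c B C =
    map_pmf (\<lambda>(v, S, t). psi_c_outcome c v S t) (io_coupling I p c B C chi y)"
  by (simp add: io_coupling_def psi_c_eq_bind[abs_def] map_bind_pmf pmf.map_comp o_def)

lemma io_coupling_psi_c_outcome_le_policy_outcome:
  assumes "finite I" "\<forall>i\<in>I. set_pmf (p i) \<subseteq> {1..B}"
    and chi_subset: "\<forall>R\<subseteq>I. \<forall>S\<in>set_pmf (chi (ybar y c B C) R). S \<subseteq> R"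
    and "(v, S, t) \<in> set_pmf (io_coupling I p c B C chi y)"
  shows "psi_c_outcome c v S t \<le> policy_outcome c v S (\<lambda>i. if i \<in> S then t i else 0)"
    and "policy_outcome c v S (\<lambda>i. if i \<in> S then t i else 0) \<in> vecs I B"
proof -
  have v: "v \<in> vecs I B" and S: "S \<in> set_pmf (chi (ybar y c B C) (Rv v))"
    using assms(4) set_h_dist_subset_vecs[OF assms(1,2)] by (auto simp: io_coupling_def)
  have "Rv v \<subseteq> I"
    using Rv_subset_if_in_vecs[OF v] .
  then have "finite (Rv v)" "S \<subseteq> Rv v"
    using finite_subset[OF _ assms(1)] chi_subset S by auto
  then show "psi_c_outcome c v S t \<le> policy_outcome c v S (\<lambda>i. if i \<in> S then t i else 0)"
    by (rule psi_c_outcome_le_policy_outcome)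
  show "policy_outcome c v S (\<lambda>i. if i \<in> S then t i else 0) \<in> vecs I B"
    using vecs_downward_closed[OF policy_outcome_le v] .
qed

theorem lemma7:
  fixes n B C :: nat
    and f :: "(nat \<Rightarrow> nat) \<Rightarrow> real"
    and p :: "nat \<Rightarrow> nat pmf"
    and c :: "nat \<Rightarrow> nat \<Rightarrow> nat"
    and Iout :: "nat set set"
    and \<beta> \<gamma> :: real
    and chi :: "(nat \<Rightarrow> real) \<Rightarrow> nat set \<Rightarrow> nat set pmf"
    and y :: "nat \<Rightarrow> nat \<Rightarrow> real"
  assumes B_pos: "B > 0" and C_pos: "C > 0"
    and f_nonneg: "\<forall>u\<in>vecs {1..n} B. f u \<ge> 0"
    and f_mono: "monotone_fn {1..n} B f"
    and f_subm: "lattice_submodular {1..n} B f"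
    and p_states: "\<forall>i\<in>{1..n}. set_pmf (p i) \<subseteq> {1..B}"
    and c_mono: "\<forall>i\<in>{1..n}. \<forall>s\<in>{1..B}. \<forall>s'\<in>{1..B}. s' \<le> s \<longrightarrow> c i s' \<le> c i s"
    and Iout_dc: "downward_closed {1..n} Iout"
    and \<beta>_range: "0 \<le> \<beta>" "\<beta> \<le> 1" and \<gamma>_range: "0 \<le> \<gamma>" "\<gamma> \<le> 1"
    and CRS: "monotone_balanced_CRS {1..n} Iout \<beta> \<gamma> chi"
    and y_P1: "P1_feasible {1..n} Iout p c B C y"
    and y_scaled: "in_scaled_poly \<beta> Iout (ybar y c B C)"
  shows "f_avg_io f {1..n} p c B C chi y \<ge>
         measure_pmf.expectation
           (bind_pmf (h_dist {1..n} p (ybar y c B C)) (psi_c chi y c B C)) f"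
proof -
  let ?z = "ybar y c B C"
  have "finite {1..n}" by simp
  have states_nonzero: "\<forall>i\<in>{1..n}. 0 \<notin> set_pmf (p i)"
    using p_states by fastforce
  have "\<forall>i. 0 \<le> ?z i"
    using y_P1 by (auto simp: P1_feasible_def ybar_def intro: sum_nonneg)
  then have chi_subset: "\<forall>R\<subseteq>{1..n}. \<forall>S\<in>set_pmf (chi ?z R). S \<subseteq> R"
    using CRS y_scaled unfolding monotone_balanced_CRS_def by blast
  show ?thesis
    unfolding f_avg_io_def bind_h_dist_psi_c_eq_map_io_coupling
      policy_io_eq_map_io_coupling[where chi = chi, OF \<open>finite {1..n}\<close> states_nonzero chi_subset]
    using io_coupling_psi_c_outcome_le_policy_outcome[where chi = chi, OF \<open>finite {1..n}\<close> p_states chi_subset]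
    by (intro expectation_map_pmf_mono[OF f_mono \<open>finite {1..n}\<close>]) auto
qed

end
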